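(* Let $(V_o,w_o,\mu_o)$ be a simple weighted graph with adapted weight $\sigma_o$ and adapted path metric $d_{\sigma_o}$, and fix $\bar x\in V_o$. Assume $C_o:=\inf_{x\in V_o}\mu_o(x)>0$ and that every ball $B_{d_{\sigma_o}}(\bar x,r)$ has finite $\mu_o$-measure. Set \[f(r)=\log\mu_o\big(B_{d_{\sigma_o}}(\bar x,r)\big)-\log C_o,\qquad R_n=2^{n+4},\qquad \sigma_n=\frac{1}{f(R_n)+2+\log\log R_n}\qquad(n\in\mathbb N).\] Let $\mathfrak n:E_o\to\mathbb N_+$ be symmetric with $\mathfrak n\ge2$, such that for every $n\in\mathbb N$ and every $e=(x,y)\in E_o$ with $d_{\sigma_o}(x,\bar x)\vee d_{\sigma_o}(y,\bar x)\ge2^{n+2}-1$, \[\mathfrak n(e)\ge f(R_n)+2+\log\log R_n.\] Let $(V,w,\mu)$ be the modified graph with weight $\mathfrak n$, with adapted weight $\sigma$ and path metric $d_\sigma$. Then for every $n\in\mathbb N$, every $e=(x,y)\in E_o^+$ and every $0\le k\le\mathfrak n(e)-1$: if $d_\sigma(x^e_k,\bar x)\vee d_\sigma(x^e_{k+1},\bar x)\ge2^{n+2}$, then $\sigma(x^e_k,x^e_{k+1})\le\sigma_n$.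
   Context: **Weighted graphs.** A simple weighted graph $(V,w,\mu)$ consists of a countably infinite set $V$, a symmetric function $w:V\times V\to[0,\infty)$ and a function $\mu:V\to(0,\infty)$. The graph with edges $\{x\sim y:w(x,y)>0\}$ is assumed to be locally finite, connected, and without loops or multiple edges. **Adapted weights and metrics.** An adapted weight is a symmetric $\sigma:E\to(0,1]$ with $\frac1{\mu(x)}\sum_y w(x,y)\sigma(x,y)^2\le1$ for all $x$. The adapted path metric $d_\sigma(x,y)$ is the infimum of $\sum_i\sigma(x_i,x_{i+1})$ over paths $x=x_0\sim\cdots\sim x_n=y$. Closed balls are $B_d(x,r)=\{y:d(x,y)\le r\}$, and $a\vee b=\max(a,b)$. **Modified graph.** Fix an orientation $E_o^+$ of $E_o$. For $e=(x,y)\in E_o^+$, add distinct new vertices $x^e_1,\dots,x^e_{\mathfrak n(e)-1}$, set $x_0^e=x$, $x^e_{\mathfrak n(e)}=y$, and replace the edge $x\sim y$ by the path $x^e_0\sim\cdots\sim x^e_{\mathfrak n(e)}$. Weights and measure: - $w(x^e_i,x^e_{i+1})=\mathfrak n(e)w_o(e)$, symmetric, and $w=0$ otherwise; - $\mu=\mu_o$ on $V_o$, and $\mu(x^e_i)=2w_o(e)\sigma_o(e)^2/\mathfrak n(e)$; - $\sigma(x^e_i,x^e_{i+1})=\sigma_o(e)/\mathfrak n(e)$. *)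

theory Defs
  imports "HOL-Analysis.Analysis"
begin

text \<open>A weighted graph on the vertex type 'v (vertex set = UNIV): edge weight w,
  measure mu. Edges are the pairs with w x y > 0.\<close>

definition is_walk :: "('v \<Rightarrow> 'v \<Rightarrow> real) \<Rightarrow> 'v list \<Rightarrow> bool" where
  "is_walk w p \<longleftrightarrow> (\<forall>i. Suc i < length p \<longrightarrow> w (p ! i) (p ! Suc i) > 0)"

definition walk_len :: "('v \<Rightarrow> 'v \<Rightarrow> real) \<Rightarrow> 'v list \<Rightarrow> real" where
  "walk_len s p = (\<Sum>i<length p - 1. s (p ! i) (p ! Suc i))"

definition simple_weighted_graph :: "('v \<Rightarrow> 'v \<Rightarrow> real) \<Rightarrow> ('v \<Rightarrow> real) \<Rightarrow> bool" where
  "simple_weighted_graph w mu \<longleftrightarrow>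
     countable (UNIV :: 'v set) \<and> infinite (UNIV :: 'v set) \<and>
     (\<forall>x y. w x y = w y x) \<and> (\<forall>x y. w x y \<ge> 0) \<and> (\<forall>x. w x x = 0) \<and>
     (\<forall>x. mu x > 0) \<and>
     (\<forall>x. finite {y. w x y > 0}) \<and>
     (\<forall>x y. \<exists>p. p \<noteq> [] \<and> hd p = x \<and> last p = y \<and> is_walk w p)"

definition adapted_weight :: "('v \<Rightarrow> 'v \<Rightarrow> real) \<Rightarrow> ('v \<Rightarrow> real) \<Rightarrow> ('v \<Rightarrow> 'v \<Rightarrow> real) \<Rightarrow> bool" where
  "adapted_weight w mu s \<longleftrightarrow>
     (\<forall>x y. w x y > 0 \<longrightarrow> s x y = s y x \<and> 0 < s x y \<and> s x y \<le> 1) \<and>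
     (\<forall>x. (1 / mu x) * (\<Sum>y\<in>{y. w x y > 0}. w x y * (s x y)\<^sup>2) \<le> 1)"

definition path_dist :: "('v \<Rightarrow> 'v \<Rightarrow> real) \<Rightarrow> ('v \<Rightarrow> 'v \<Rightarrow> real) \<Rightarrow> 'v \<Rightarrow> 'v \<Rightarrow> real" where
  "path_dist w s x y =
     Inf {walk_len s p | p. p \<noteq> [] \<and> hd p = x \<and> last p = y \<and> is_walk w p}"

definition cball_d :: "('v \<Rightarrow> 'v \<Rightarrow> real) \<Rightarrow> 'v \<Rightarrow> real \<Rightarrow> 'v set" where
  "cball_d d x r = {y. d x y \<le> r}"

definition orientation :: "('v \<Rightarrow> 'v \<Rightarrow> real) \<Rightarrow> ('v \<times> 'v) set \<Rightarrow> bool" where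
  "orientation w Ep \<longleftrightarrow> (\<forall>(x,y)\<in>Ep. w x y > 0) \<and>
     (\<forall>x y. w x y > 0 \<longrightarrow> ((x,y) \<in> Ep \<longleftrightarrow> (y,x) \<notin> Ep))"

datatype 'v mvert = Orig 'v | Sub "'v \<times> 'v" nat

definition xe :: "('v \<Rightarrow> 'v \<Rightarrow> nat) \<Rightarrow> 'v \<times> 'v \<Rightarrow> nat \<Rightarrow> 'v mvert" where
  "xe nn e i = (if i = 0 then Orig (fst e)
                else if i = nn (fst e) (snd e) then Orig (snd e) else Sub e i)"

definition mod_seg :: "('v \<times> 'v) set \<Rightarrow> ('v \<Rightarrow> 'v \<Rightarrow> nat) \<Rightarrow> 'v \<times> 'v \<Rightarrow> nat
     \<Rightarrow> 'v mvert \<Rightarrow> 'v mvert \<Rightarrow> bool" where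
  "mod_seg Ep nn e i a b \<longleftrightarrow> e \<in> Ep \<and> i < nn (fst e) (snd e) \<and>
     {a, b} = {xe nn e i, xe nn e (Suc i)}"

definition mod_w :: "('v \<times> 'v) set \<Rightarrow> ('v \<Rightarrow> 'v \<Rightarrow> nat) \<Rightarrow> ('v \<Rightarrow> 'v \<Rightarrow> real)
     \<Rightarrow> 'v mvert \<Rightarrow> 'v mvert \<Rightarrow> real" where
  "mod_w Ep nn w a b = (if \<exists>e i. mod_seg Ep nn e i a b
     then (let e = (SOME e. \<exists>i. mod_seg Ep nn e i a b)
           in real (nn (fst e) (snd e)) * w (fst e) (snd e))
     else 0)"

definition mod_sigma :: "('v \<times> 'v) set \<Rightarrow> ('v \<Rightarrow> 'v \<Rightarrow> nat) \<Rightarrow> ('v \<Rightarrow> 'v \<Rightarrow> real)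
     \<Rightarrow> 'v mvert \<Rightarrow> 'v mvert \<Rightarrow> real" where
  "mod_sigma Ep nn s a b = (if \<exists>e i. mod_seg Ep nn e i a b
     then (let e = (SOME e. \<exists>i. mod_seg Ep nn e i a b)
           in s (fst e) (snd e) / real (nn (fst e) (snd e)))
     else 0)"

definition mod_mu :: "('v \<Rightarrow> 'v \<Rightarrow> nat) \<Rightarrow> ('v \<Rightarrow> 'v \<Rightarrow> real) \<Rightarrow> ('v \<Rightarrow> 'v \<Rightarrow> real)
     \<Rightarrow> ('v \<Rightarrow> real) \<Rightarrow> 'v mvert \<Rightarrow> real" where
  "mod_mu nn w s mu v = (case v of Orig x \<Rightarrow> mu x
     | Sub e i \<Rightarrow> 2 * w (fst e) (snd e) * (s (fst e) (snd e))\<^sup>2 / real (nn (fst e) (snd e)))"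

end

theory Submission
  imports Defs
begin

text \<open>In the modified graph every original edge e = (x,y) becomes a path of total sigma-length
  sigma_o(e), so modified distances between original vertices are at most the original ones, and
  every vertex of the subdivided edge is within sigma_o(e) \<le> 1 of x. Hence if a segment of e is at
  modified distance \<ge> 2^(n+2) from xbar, then d(x, xbar) \<ge> 2^(n+2) - 1, and the hypothesis on nn
  gives nn(e) \<ge> f(R_n) + 2 + log log R_n, which is positive because the ball contains xbar and
  R_n \<ge> 16. The segment carries sigma = sigma_o(e)/nn(e) \<le> 1/nn(e) \<le> sigma_n.\<close>

inductive has_walk :: "('v \<Rightarrow> 'v \<Rightarrow> real) \<Rightarrow> ('v \<Rightarrow> 'v \<Rightarrow> real) \<Rightarrow> 'v \<Rightarrow> 'v \<Rightarrow> real \<Rightarrow> bool"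
  for W S where
  has_walk_refl: "has_walk W S a a 0"
| has_walk_step: "W a b > 0 \<Longrightarrow> has_walk W S b c L \<Longrightarrow> has_walk W S a c (S a b + L)"

lemma has_walk_trans:
  "has_walk W S a b L1 \<Longrightarrow> has_walk W S b c L2 \<Longrightarrow> has_walk W S a c (L1 + L2)"
  by (induction rule: has_walk.induct) (auto simp: add.assoc intro: has_walk_step)

lemma has_walk_edge: "W a b > 0 \<Longrightarrow> has_walk W S a b (S a b)"
  using has_walk_step[OF _ has_walk_refl] by fastforce

lemma has_walk_rev:
  assumes "\<And>x y. W x y = W y x" and "\<And>x y. S x y = S y x"
  shows "has_walk W S a b L \<Longrightarrow> has_walk W S b a L"
proof (induction rule: has_walk.induct)
  case (has_walk_refl a)
  show ?case by (rule has_walk.has_walk_refl)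
next
  case (has_walk_step a b c L)
  have "has_walk W S c a (L + S b a)"
    using has_walk_trans[OF has_walk_step.IH has_walk_edge] has_walk_step.hyps(1) assms(1) by metis
  then show ?case by (simp add: assms(2) add.commute)
qed

lemma has_walk_nonneg:
  "has_walk W S a b L \<Longrightarrow> (\<And>x y. W x y > 0 \<Longrightarrow> 0 \<le> S x y) \<Longrightarrow> 0 \<le> L"
  by (induction rule: has_walk.induct) fastforce+

lemma is_walk_Cons_Cons: "is_walk W (a # b # p) \<longleftrightarrow> W a b > 0 \<and> is_walk W (b # p)"
  unfolding is_walk_def by (auto simp: less_Suc_eq_0_disj)

lemma walk_len_Cons_Cons: "walk_len S (a # b # p) = S a b + walk_len S (b # p)"
  unfolding walk_len_def by (simp only: length_Cons diff_Suc_1 sum.lessThan_Suc_shift) simp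

lemma has_walk_iff_walk:
  "has_walk W S a b L \<longleftrightarrow>
     (\<exists>p. p \<noteq> [] \<and> hd p = a \<and> last p = b \<and> is_walk W p \<and> walk_len S p = L)"
proof
  show "has_walk W S a b L \<Longrightarrow> \<exists>p. p \<noteq> [] \<and> hd p = a \<and> last p = b \<and> is_walk W p \<and> walk_len S p = L"
  proof (induction rule: has_walk.induct)
    case (has_walk_refl a)
    show ?case by (rule exI[of _ "[a]"]) (simp add: is_walk_def walk_len_def)
  next
    case (has_walk_step a b c L)
    then obtain q where "is_walk W (b # q)" "last (b # q) = c" "walk_len S (b # q) = L"
      by (metis list.collapse)
    with has_walk_step.hyps show ?case
      by (intro exI[of _ "a # b # q"]) (simp add: is_walk_Cons_Cons walk_len_Cons_Cons)
  qed
next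
  have "p \<noteq> [] \<Longrightarrow> is_walk W p \<Longrightarrow> has_walk W S (hd p) (last p) (walk_len S p)" for p
  proof (induction p rule: induct_list012)
    case (2 x)
    show ?case using has_walk_refl[of W S x] by (simp add: walk_len_def)
  next
    case (3 x y p)
    then show ?case by (auto simp: is_walk_Cons_Cons walk_len_Cons_Cons intro: has_walk_step)
  qed simp
  then show "\<exists>p. p \<noteq> [] \<and> hd p = a \<and> last p = b \<and> is_walk W p \<and> walk_len S p = L \<Longrightarrow> has_walk W S a b L"
    by blast
qed

lemma path_dist_eq_Inf_has_walk: "path_dist W S a b = Inf {L. has_walk W S a b L}"
  unfolding path_dist_def has_walk_iff_walk by (metis (lifting))

lemma path_dist_le_has_walk:
  assumes "has_walk W S a b L" and "\<And>x y. W x y > 0 \<Longrightarrow> 0 \<le> S x y"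
  shows "path_dist W S a b \<le> L"
  unfolding path_dist_eq_Inf_has_walk
proof (rule cInf_lower)
  show "bdd_below {L. has_walk W S a b L}"
    using has_walk_nonneg assms(2) unfolding bdd_below_def by (metis mem_Collect_eq)
qed (use assms(1) in simp)

lemma path_dist_less_imp_has_walk:
  assumes "path_dist W S a b < T" and "has_walk W S a b L0"
  obtains L where "L < T" and "has_walk W S a b L"
  using cInf_lessD[of "{L. has_walk W S a b L}" T] assms
  unfolding path_dist_eq_Inf_has_walk by blast

lemma path_dist_le_has_walk_plus:
  assumes walk: "has_walk W S a b L" and conn: "has_walk W S b c L0"
    and nonneg: "\<And>x y. W x y > 0 \<Longrightarrow> 0 \<le> S x y"
  shows "path_dist W S a c \<le> L + path_dist W S b c"
proof (rule dense_ge)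
  fix T assume "L + path_dist W S b c < T"
  then obtain L' where "L' < T - L" and "has_walk W S b c L'"
    using path_dist_less_imp_has_walk[OF _ conn] by (metis less_diff_eq add.commute)
  moreover from this have "path_dist W S a c \<le> L + L'"
    by (intro path_dist_le_has_walk[OF has_walk_trans[OF walk]] nonneg)
  ultimately show "path_dist W S a c \<le> T"
    by linarith
qed

lemma mod_seg_commute: "mod_seg Ep nn e i a b \<longleftrightarrow> mod_seg Ep nn e i b a"
  unfolding mod_seg_def by (simp add: insert_commute)

lemma mod_w_commute: "mod_w Ep nn w a b = mod_w Ep nn w b a"
  unfolding mod_w_def by (simp add: mod_seg_commute)

lemma mod_sigma_commute: "mod_sigma Ep nn s a b = mod_sigma Ep nn s b a"
  unfolding mod_sigma_def by (simp add: mod_seg_commute)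

text \<open>As nn e \<ge> 2, every segment of the subdivided edge e has an endpoint Sub e m, which
  determines e; so the choice made in mod_w and mod_sigma is unique on these segments.\<close>
lemma some_mod_seg_eq:
  assumes e: "e \<in> Ep" and nn_e: "2 \<le> nn (fst e) (snd e)" and j: "j < nn (fst e) (snd e)"
    and ab: "{a, b} = {xe nn e j, xe nn e (Suc j)}"
  shows "(SOME e. \<exists>i. mod_seg Ep nn e i a b) = e"
proof -
  obtain m where m: "Sub e m \<in> {a, b}"
    using ab j nn_e unfolding xe_def by (cases "j = 0") auto
  have unique: "e' = e" if "mod_seg Ep nn e' i a b" for e' i
    using that m unfolding mod_seg_def xe_def by (auto split: if_splits)
  have "\<exists>e i. mod_seg Ep nn e i a b"
    using e j ab unfolding mod_seg_def by blast
  then have "\<exists>i. mod_seg Ep nn (SOME e. \<exists>i. mod_seg Ep nn e i a b) i a b"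
    by (rule someI_ex)
  then show ?thesis
    using unique by blast
qed

lemma
  assumes "e \<in> Ep" and "2 \<le> nn (fst e) (snd e)" and "j < nn (fst e) (snd e)"
    and "{a, b} = {xe nn e j, xe nn e (Suc j)}"
  shows mod_w_segment: "mod_w Ep nn w a b = real (nn (fst e) (snd e)) * w (fst e) (snd e)"
    and mod_sigma_segment: "mod_sigma Ep nn s a b = s (fst e) (snd e) / real (nn (fst e) (snd e))"
proof -
  have "\<exists>e i. mod_seg Ep nn e i a b"
    using assms unfolding mod_seg_def by blast
  then show "mod_w Ep nn w a b = real (nn (fst e) (snd e)) * w (fst e) (snd e)"
    and "mod_sigma Ep nn s a b = s (fst e) (snd e) / real (nn (fst e) (snd e))"
    unfolding mod_w_def mod_sigma_def some_mod_seg_eq[OF assms] by simp_all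
qed

locale subdivision =
  fixes w :: "'v \<Rightarrow> 'v \<Rightarrow> real" and s :: "'v \<Rightarrow> 'v \<Rightarrow> real"
    and nn :: "'v \<Rightarrow> 'v \<Rightarrow> nat" and Ep :: "('v \<times> 'v) set"
  assumes orient: "orientation w Ep"
    and nn_ge2: "\<And>x y. w x y > 0 \<Longrightarrow> 2 \<le> nn x y"
    and s_sym: "\<And>x y. w x y > 0 \<Longrightarrow> s x y = s y x"
    and s_nonneg: "\<And>x y. w x y > 0 \<Longrightarrow> 0 \<le> s x y"
begin

abbreviation "W \<equiv> mod_w Ep nn w"
abbreviation "S \<equiv> mod_sigma Ep nn s"

lemma edge_pos: "(x, y) \<in> Ep \<Longrightarrow> w x y > 0"
  using orient unfolding orientation_def by auto

lemma mod_sigma_nonneg: "0 \<le> S a b"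
proof (cases "\<exists>e i. mod_seg Ep nn e i a b")
  case True
  define e where "e = (SOME e. \<exists>i. mod_seg Ep nn e i a b)"
  obtain i where "mod_seg Ep nn e i a b"
    using someI_ex[OF True] unfolding e_def by blast
  then have "w (fst e) (snd e) > 0"
    using edge_pos unfolding mod_seg_def by simp
  moreover have "S a b = s (fst e) (snd e) / real (nn (fst e) (snd e))"
    using True unfolding mod_sigma_def e_def Let_def by (simp only: if_True)
  ultimately show ?thesis
    using s_nonneg by simp
qed (simp add: mod_sigma_def)

lemma has_walk_along_segment:
  assumes e: "(x, y) \<in> Ep"
  shows "j \<le> nn x y \<Longrightarrow> has_walk W S (xe nn (x, y) 0) (xe nn (x, y) j) (real j * (s x y / real (nn x y)))"
proof (induction j)
  case 0
  show ?case by (simp add: has_walk_refl)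
next
  case (Suc j)
  have wxy: "w x y > 0" and nn_xy: "2 \<le> nn x y"
    using edge_pos[OF e] nn_ge2 by auto
  have "j < nn x y" using Suc.prems by simp
  then have edge: "W (xe nn (x, y) j) (xe nn (x, y) (Suc j)) > 0"
    and sigma: "S (xe nn (x, y) j) (xe nn (x, y) (Suc j)) = s x y / real (nn x y)"
    using mod_w_segment[OF e] mod_sigma_segment[OF e] nn_xy wxy by auto
  have walk: "has_walk W S (xe nn (x, y) 0) (xe nn (x, y) (Suc j))
      (real j * (s x y / real (nn x y)) + s x y / real (nn x y))"
    using has_walk_trans[OF Suc.IH has_walk_edge[where W = W and S = S, OF edge]] Suc.prems sigma by simp
  have "real (Suc j) * (s x y / real (nn x y))
      = real j * (s x y / real (nn x y)) + s x y / real (nn x y)"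
    by (simp only: of_nat_Suc distrib_right mult_1_left)
  with walk show ?case
    by (simp only:)
qed

lemma has_walk_mod_rev: "has_walk W S a b L \<Longrightarrow> has_walk W S b a L"
  by (rule has_walk_rev[OF mod_w_commute mod_sigma_commute])

lemma has_walk_mod_edge:
  assumes "w a b > 0"
  shows "has_walk W S (Orig a) (Orig b) (s a b)"
proof -
  have walk: "has_walk W S (Orig x) (Orig y) (s x y)" if "(x, y) \<in> Ep" for x y
  proof -
    have "2 \<le> nn x y" using nn_ge2 edge_pos[OF that] .
    then show ?thesis
      using has_walk_along_segment[OF that, of "nn x y"] by (simp add: xe_def)
  qed
  show ?thesis
  proof (cases "(a, b) \<in> Ep")
    case True
    then show ?thesis by (rule walk)
  next
    case False
    then have "(b, a) \<in> Ep" using assms orient unfolding orientation_def by blast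
    then show ?thesis using walk has_walk_mod_rev s_sym[OF assms] by metis
  qed
qed

lemma has_walk_mod: "has_walk w s a b L \<Longrightarrow> has_walk W S (Orig a) (Orig b) L"
proof (induction rule: has_walk.induct)
  case (has_walk_refl a)
  show ?case by (rule has_walk.has_walk_refl)
next
  case (has_walk_step a b c L)
  show ?case by (rule has_walk_trans[OF has_walk_mod_edge[OF has_walk_step.hyps(1)] has_walk_step.IH])
qed

lemma path_dist_mod_le:
  assumes conn: "has_walk w s a b L0"
  shows "path_dist W S (Orig a) (Orig b) \<le> path_dist w s a b"
proof (rule dense_ge)
  fix T assume "path_dist w s a b < T"
  then obtain L where "L < T" and "has_walk w s a b L"
    using path_dist_less_imp_has_walk[OF _ conn] by blast
  then show "path_dist W S (Orig a) (Orig b) \<le> T"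
    using path_dist_le_has_walk[OF has_walk_mod mod_sigma_nonneg] by (meson less_imp_le order_trans)
qed

lemma path_dist_mod_segment_le:
  assumes e: "(x, y) \<in> Ep" and j: "j \<le> nn x y" and conn: "has_walk w s x z L0"
  shows "path_dist W S (xe nn (x, y) j) (Orig z) \<le> s x y + path_dist w s x z"
proof -
  let ?L = "real j * (s x y / real (nn x y))"
  have "?L \<le> real (nn x y) * (s x y / real (nn x y))"
    using j s_nonneg[OF edge_pos[OF e]] by (intro mult_right_mono) simp_all
  then have L_le: "?L \<le> s x y"
    using nn_ge2[OF edge_pos[OF e]] by simp
  have "has_walk W S (xe nn (x, y) j) (Orig x) ?L"
    using has_walk_mod_rev[OF has_walk_along_segment[OF e j]] by (simp add: xe_def)
  then have "path_dist W S (xe nn (x, y) j) (Orig z) \<le> ?L + path_dist W S (Orig x) (Orig z)"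
    using path_dist_le_has_walk_plus[OF _ has_walk_mod[OF conn] mod_sigma_nonneg] by blast
  then show ?thesis
    using L_le path_dist_mod_le[OF conn] by linarith
qed

lemma far_segment_imp_path_dist_ge:
  assumes e: "(x, y) \<in> Ep" and k: "k < nn x y" and conn: "has_walk w s x z L0"
    and far: "T \<le> max (path_dist W S (xe nn (x, y) k) (Orig z))
                       (path_dist W S (xe nn (x, y) (Suc k)) (Orig z))"
  shows "T - s x y \<le> path_dist w s x z"
  using far path_dist_mod_segment_le[OF e _ conn, of k] path_dist_mod_segment_le[OF e _ conn, of "Suc k"] k
  by simp

end

lemma simple_weighted_graph_has_walk:
  assumes "simple_weighted_graph w mu"
  obtains L where "has_walk w s a b L"
  using assms unfolding simple_weighted_graph_def has_walk_iff_walk by blast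

lemma INF_le_infsum:
  fixes mu :: "'a \<Rightarrow> real"
  assumes "x \<in> A" and "mu summable_on A" and "\<And>y. 0 \<le> mu y"
  shows "(INF y. mu y) \<le> infsum mu A"
proof -
  have "(INF y. mu y) \<le> mu x"
    using assms(3) by (intro cINF_lower) (auto simp: bdd_below_def)
  also have "mu x = infsum mu {x}"
    by simp
  also have "\<dots> \<le> infsum mu A"
    using assms by (intro infsum_mono2) auto
  finally show ?thesis .
qed

lemma ln_ln_two_power_pos: "0 < ln (ln (2 ^ (n + 4) :: real))"
proof -
  have "exp 1 < (2 ^ 4 :: real)"
    using exp_le by simp
  also have "(2 ^ 4 :: real) \<le> 2 ^ (n + 4)"
    by (rule power_increasing) simp_all
  finally have "1 < ln (2 ^ (n + 4) :: real)"
    using ln_less_cancel_iff[of "exp 1"] by fastforce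
  then show ?thesis
    by simp
qed

lemma adapted_weight_edge:
  "adapted_weight w mu s \<Longrightarrow> w x y > 0 \<Longrightarrow> 0 < s x y \<and> s x y \<le> 1 \<and> s x y = s y x"
  unfolding adapted_weight_def by metis

lemma ln_INF_le_ln_measure_ball:
  assumes graph: "simple_weighted_graph w mu" and adapted: "adapted_weight w mu s"
    and pos: "0 < (INF x. mu x)" and summable: "mu summable_on (cball_d (path_dist w s) xbar r)"
    and r: "0 \<le> r"
  shows "ln (INF x. mu x) \<le> ln (infsum mu (cball_d (path_dist w s) xbar r))"
proof (intro ln_mono pos)
  have "path_dist w s xbar xbar \<le> r"
    using path_dist_le_has_walk[OF has_walk_refl, of w s xbar] adapted_weight_edge[OF adapted] r
    by (smt (verit))
  then show "(INF x. mu x) \<le> infsum mu (cball_d (path_dist w s) xbar r)"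
    using graph summable
    by (intro INF_le_infsum[of xbar]) (auto simp: cball_d_def simple_weighted_graph_def less_imp_le)
qed

theorem lemma4p1:
  fixes w :: "'v \<Rightarrow> 'v \<Rightarrow> real" and mu :: "'v \<Rightarrow> real" and s :: "'v \<Rightarrow> 'v \<Rightarrow> real"
    and xbar :: 'v and nn :: "'v \<Rightarrow> 'v \<Rightarrow> nat" and Ep :: "('v \<times> 'v) set"
    and f :: "real \<Rightarrow> real" and R :: "nat \<Rightarrow> real" and sig :: "nat \<Rightarrow> real" and Co :: real
  assumes graph: "simple_weighted_graph w mu"
    and adapted: "adapted_weight w mu s"
    and Co_def: "Co = (INF x. mu x)"
    and Co_pos: "Co > 0"
    and balls_finite: "\<And>r. mu summable_on (cball_d (path_dist w s) xbar r)"
    and f_def: "\<And>r. f r = ln (infsum mu (cball_d (path_dist w s) xbar r)) - ln Co"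
    and R_def: "\<And>n. R n = 2 ^ (n + 4)"
    and sig_def: "\<And>n. sig n = 1 / (f (R n) + 2 + ln (ln (R n)))"
    and nn_sym: "\<And>x y. w x y > 0 \<Longrightarrow> nn x y = nn y x"
    and nn_ge2: "\<And>x y. w x y > 0 \<Longrightarrow> nn x y \<ge> 2"
    and nn_large: "\<And>n x y. w x y > 0 \<Longrightarrow>
        max (path_dist w s x xbar) (path_dist w s y xbar) \<ge> 2 ^ (n + 2) - 1 \<Longrightarrow>
        real (nn x y) \<ge> f (R n) + 2 + ln (ln (R n))"
    and orient: "orientation w Ep"
  shows "\<forall>n. \<forall>e\<in>Ep. \<forall>k. k \<le> nn (fst e) (snd e) - 1 \<longrightarrow>
     max (path_dist (mod_w Ep nn w) (mod_sigma Ep nn s) (xe nn e k) (Orig xbar))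
         (path_dist (mod_w Ep nn w) (mod_sigma Ep nn s) (xe nn e (Suc k)) (Orig xbar))
       \<ge> 2 ^ (n + 2)
     \<longrightarrow> mod_sigma Ep nn s (xe nn e k) (xe nn e (Suc k)) \<le> sig n"
proof (intro allI ballI impI)
  fix n e k
  assume e: "e \<in> Ep" and k: "k \<le> nn (fst e) (snd e) - 1"
    and far: "max (path_dist (mod_w Ep nn w) (mod_sigma Ep nn s) (xe nn e k) (Orig xbar))
         (path_dist (mod_w Ep nn w) (mod_sigma Ep nn s) (xe nn e (Suc k)) (Orig xbar)) \<ge> 2 ^ (n + 2)"
  interpret subdivision w s nn Ep
    using orient nn_ge2 adapted_weight_edge[OF adapted] by unfold_locales (auto simp: less_imp_le)
  obtain x y where e_xy: "e = (x, y)" by fastforce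
  have wxy: "w x y > 0" and e': "(x, y) \<in> Ep" and k': "k < nn x y"
    using e e_xy edge_pos k nn_ge2[of x y] by auto
  note s_xy = adapted_weight_edge[OF adapted wxy]
  obtain L0 where conn: "has_walk w s x xbar L0"
    using simple_weighted_graph_has_walk[OF graph] .
  have "2 ^ (n + 2) - 1 \<le> path_dist w s x xbar"
    using far_segment_imp_path_dist_ge[OF e' k' conn] far s_xy unfolding e_xy by fastforce
  then have nn_big: "f (R n) + 2 + ln (ln (R n)) \<le> nn x y"
    using nn_large[OF wxy] by simp
  have "0 \<le> f (R n)"
    using ln_INF_le_ln_measure_ball[OF graph adapted _ balls_finite] Co_pos
    unfolding f_def Co_def R_def by simp
  moreover have "0 < ln (ln (R n))"
    unfolding R_def by (rule ln_ln_two_power_pos)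
  ultimately have "0 < f (R n) + 2 + ln (ln (R n))"
    by linarith
  then have "1 / real (nn x y) \<le> sig n"
    unfolding sig_def using nn_big by (simp add: frac_le)
  moreover have "S (xe nn e k) (xe nn e (Suc k)) = s x y / real (nn x y)"
    using mod_sigma_segment[OF e'] nn_ge2[OF wxy] k' e_xy by simp
  moreover have "s x y / real (nn x y) \<le> 1 / real (nn x y)"
    using s_xy by (simp add: divide_right_mono)
  ultimately show "S (xe nn e k) (xe nn e (Suc k)) \<le> sig n"
    by linarith
qed

end
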